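(* Let $A\in SL(3,\mathbb{Z})$ be hyperbolic (no eigenvalue of modulus $1$). If $B\in SL(3,\mathbb{Z})$ satisfies $AB=BA$, then either $B=\mathrm{Id}$ or $B$ is hyperbolic. *)

theory Defs
  imports "HOL-Analysis.Analysis"
begin

definition cmat :: "int^3^3 \<Rightarrow> complex^3^3" where
  "cmat A = (\<chi> i j. of_int (A $ i $ j))"

definition is_eigenvalue :: "int^3^3 \<Rightarrow> complex \<Rightarrow> bool" where
  "is_eigenvalue A \<mu> \<longleftrightarrow> (\<exists>v. v \<noteq> 0 \<and> cmat A *v v = \<mu> *s v)"

definition SL3Z :: "int^3^3 \<Rightarrow> bool" where
  "SL3Z A \<longleftrightarrow> det A = 1"

definition hyperbolic :: "int^3^3 \<Rightarrow> bool" where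
  "hyperbolic A \<longleftrightarrow> (\<forall>\<mu>. is_eigenvalue A \<mu> \<longrightarrow> cmod \<mu> \<noteq> 1)"

end

theory Submission imports Defs begin

text \<open>A non-hyperbolic \<open>B \<in> SL(3,\<int>)\<close> has an eigenvalue on the unit circle; as its
  characteristic polynomial is real with constant term \<open>-1\<close>, this forces \<open>1\<close> or \<open>-1\<close> to be
  an eigenvalue \<open>e\<close>. Then \<open>C = B - e I\<close> is a singular integer matrix commuting with \<open>A\<close>.
  If \<open>C \<noteq> 0\<close>, then \<open>C\<close> or its adjugate is a nonzero matrix of rank one commuting with \<open>A\<close>,
  whose columns are integer eigenvectors of \<open>A\<close> with a rational eigenvalue. By the rational
  root test applied to the characteristic polynomial of \<open>A\<close> (monic, constant term \<open>-1\<close>) that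
  eigenvalue is \<open>\<plusminus>1\<close>, contradicting hyperbolicity of \<open>A\<close>. Hence \<open>B = e I\<close>, and \<open>det B = 1\<close>
  gives \<open>e = 1\<close>.\<close>

definition principal_minor_sum :: "'a::comm_ring_1^3^3 \<Rightarrow> 'a" where
  "principal_minor_sum M =
     M$1$1*M$2$2 - M$1$2*M$2$1 + M$1$1*M$3$3 - M$1$3*M$3$1 + M$2$2*M$3$3 - M$2$3*M$3$2"

text \<open>The classical adjugate (see \<open>adjugate3_entries\<close>), written via Cayley--Hamilton as a
  polynomial in \<open>M\<close>, so that it commutes with everything that commutes with \<open>M\<close>.\<close>
definition adjugate3 :: "'a::comm_ring_1^3^3 \<Rightarrow> 'a^3^3" where
  "adjugate3 M = M ** M - mat (trace M) ** M + mat (principal_minor_sum M)"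

lemma trace_3: "trace (M :: 'a::comm_ring_1^3^3) = M$1$1 + M$2$2 + M$3$3"
  by (simp add: trace_def sum_3)

lemma adjugate3_entries:
  fixes M :: "'a::comm_ring_1^3^3"
  shows "adjugate3 M $1$1 = M$2$2*M$3$3 - M$2$3*M$3$2"
    "adjugate3 M $1$2 = M$1$3*M$3$2 - M$1$2*M$3$3"
    "adjugate3 M $1$3 = M$1$2*M$2$3 - M$1$3*M$2$2"
    "adjugate3 M $2$1 = M$2$3*M$3$1 - M$2$1*M$3$3"
    "adjugate3 M $2$2 = M$1$1*M$3$3 - M$1$3*M$3$1"
    "adjugate3 M $2$3 = M$1$3*M$2$1 - M$1$1*M$2$3"
    "adjugate3 M $3$1 = M$2$1*M$3$2 - M$2$2*M$3$1"
    "adjugate3 M $3$2 = M$1$2*M$3$1 - M$1$1*M$3$2"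
    "adjugate3 M $3$3 = M$1$1*M$2$2 - M$1$2*M$2$1"
  by (simp_all add: adjugate3_def trace_3 principal_minor_sum_def matrix_matrix_mult_def
      mat_def sum_3 algebra_simps)

lemma adjugate3_mult:
  fixes M :: "'a::comm_ring_1^3^3"
  shows "adjugate3 M ** M = mat (det M)"
  by (simp add: vec_eq_iff forall_3 matrix_matrix_mult_def sum_3 mat_def det_3
      adjugate3_entries algebra_simps)

lemma adjugate3_adjugate3:
  fixes M :: "'a::comm_ring_1^3^3"
  shows "adjugate3 (adjugate3 M) = mat (det M) ** M"
  by (simp add: vec_eq_iff forall_3 matrix_matrix_mult_def sum_3 mat_def det_3
      adjugate3_entries algebra_simps)

lemma adjugate3_eq_0_imp_minors:
  fixes D :: "'a::comm_ring_1^3^3"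
  assumes "adjugate3 D = 0"
  shows "D$i$j * D$k$l = D$i$l * D$k$j"
proof -
  have minors: "D$2$2*D$3$3 = D$2$3*D$3$2" "D$1$3*D$3$2 = D$1$2*D$3$3"
    "D$1$2*D$2$3 = D$1$3*D$2$2" "D$2$3*D$3$1 = D$2$1*D$3$3" "D$1$1*D$3$3 = D$1$3*D$3$1"
    "D$1$3*D$2$1 = D$1$1*D$2$3" "D$2$1*D$3$2 = D$2$2*D$3$1" "D$1$2*D$3$1 = D$1$1*D$3$2"
    "D$1$1*D$2$2 = D$1$2*D$2$1"
    using assms adjugate3_entries[of D] by (simp_all add: vec_eq_iff forall_3)
  show ?thesis
    using exhaust_3[of i] exhaust_3[of j] exhaust_3[of k] exhaust_3[of l]
    by (auto simp: minors mult.commute) (auto simp: minors[symmetric] mult.commute)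
qed

lemma det_eq_0_of_kernel:
  fixes M :: "'a::idom^3^3"
  assumes "M *v v = 0" "v \<noteq> 0"
  shows "det M = 0"
proof -
  have "mat (det M) *v v = 0"
    using assms(1) by (simp add: adjugate3_mult[symmetric] matrix_vector_mul_assoc[symmetric])
  with assms(2) show ?thesis
    by (simp add: vec_eq_iff matrix_vector_mult_def mat_def sum_3 forall_3) blast
qed

lemma det_scaled_sub_mat:
  fixes M :: "'a::comm_ring_1^3^3"
  shows "det (mat d ** M - mat m) + m^3
           = trace M * m^2 * d - principal_minor_sum M * m * d^2 + d^3 * det M"
  by (simp add: det_3 trace_3 principal_minor_sum_def mat_def matrix_matrix_mult_def sum_3
      algebra_simps power2_eq_square power3_eq_cube)

lemma det_sub_mat:
  fixes M :: "'a::comm_ring_1^3^3"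
  shows "det (M - mat m) + m^3 = trace M * m^2 - principal_minor_sum M * m + det M"
  using det_scaled_sub_mat[of 1 M m] by simp

lemma mat_mult_vector: "mat k *v (v::'a::comm_ring_1^'n) = k *s v"
  by (simp add: vec_eq_iff matrix_vector_mult_def mat_def if_distrib if_distribR sum.delta'
      cong: if_cong)

lemma matrix_mult_commute_mat: "(A::'a::comm_ring_1^'n^'n) ** mat k = mat k ** A"
  by (simp add: vec_eq_iff matrix_matrix_mult_def mat_def if_distrib if_distribR
      sum.delta sum.delta' mult.commute cong: if_cong)

lemma matrix_mult_diff_left: "(A::'a::comm_ring_1^'n^'m) ** (X - Y) = A ** X - A ** Y"
  by (simp add: matrix_matrix_mult_def vec_eq_iff sum_subtractf algebra_simps)

lemma matrix_mult_diff_right: "((X::'a::comm_ring_1^'n^'m) - Y) ** A = X ** A - Y ** A"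
  by (simp add: matrix_matrix_mult_def vec_eq_iff sum_subtractf algebra_simps)

lemma matrix_mult_add_right: "((X::'a::comm_ring_1^'n^'m) + Y) ** A = X ** A + Y ** A"
  by (simp add: matrix_matrix_mult_def vec_eq_iff sum.distrib algebra_simps)

lemma commute_sub_mat:
  fixes A B :: "'a::comm_ring_1^'n^'n"
  assumes "A ** B = B ** A"
  shows "A ** (B - mat k) = (B - mat k) ** A"
  by (simp add: matrix_mult_diff_left matrix_mult_diff_right matrix_mult_commute_mat assms)

lemma commute_adjugate3:
  fixes A C :: "'a::comm_ring_1^3^3"
  assumes "A ** C = C ** A"
  shows "A ** adjugate3 C = adjugate3 C ** A"
proof -
  have "A ** (C ** C) = (C ** C) ** A"
    by (metis assms matrix_mul_assoc)
  moreover have "A ** (mat t ** C) = (mat t ** C) ** A" for t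
    by (metis assms matrix_mul_assoc matrix_mult_commute_mat)
  ultimately show ?thesis
    unfolding adjugate3_def
    by (simp add: matrix_add_ldistrib matrix_mult_diff_left matrix_mult_diff_right
        matrix_mult_add_right matrix_mult_commute_mat)
qed

text \<open>\<open>adjugate3 D = 0\<close> says that \<open>D\<close> has rank at most one, so every column of \<open>D\<close> is an
  eigenvector of \<open>A\<close>, with eigenvalue the ratio of two entries of \<open>D ** A\<close> and \<open>D\<close>.\<close>
lemma commute_rank_one_column_eigenvector:
  fixes A D :: "'a::comm_ring_1^3^3"
  assumes "adjugate3 D = 0" and "A ** D = D ** A"
  shows "D$k$l *s (A *v column l D) = (D ** A)$k$l *s column l D"
proof -
  have "D$k$l * (A *v column l D)$i = (D ** A)$k$l * column l D $i" for i
  proof -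
    have "(A *v column l D)$i = (D ** A)$i$l"
      using assms(2)[symmetric]
      by (simp add: matrix_vector_mult_def matrix_matrix_mult_def column_def)
    then have "D$k$l * (A *v column l D)$i = (\<Sum>j\<in>UNIV. D$i$j * D$k$l * A$j$l)"
      by (simp add: matrix_matrix_mult_def sum_distrib_left mult_ac)
    also have "\<dots> = (\<Sum>j\<in>UNIV. D$i$l * (D$k$j * A$j$l))"
      by (simp add: adjugate3_eq_0_imp_minors[OF assms(1)] mult_ac)
    also have "\<dots> = (D ** A)$k$l * column l D $i"
      by (simp add: column_def matrix_matrix_mult_def sum_distrib_left mult.commute)
    finally show ?thesis .
  qed
  then show ?thesis by (simp add: vec_eq_iff)
qed

text \<open>The hypothesis says that \<open>m / d\<close> is a root of \<open>x\<^sup>3 - t x\<^sup>2 + s x - 1\<close>; by the rational root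
  test it is \<open>\<plusminus>1\<close>.\<close>
lemma cubic_rational_root_unit:
  fixes m d t s :: int
  assumes "d \<noteq> 0" and "d^3 + t*m^2*d = m^3 + s*m*d^2"
  shows "\<bar>m\<bar> = \<bar>d\<bar>"
proof -
  define g where "g = gcd m d"
  have "g \<noteq> 0" using assms(1) by (simp add: g_def)
  obtain m' d' where m: "m = m' * g" and d: "d = d' * g" and "coprime m' d'"
    using gcd_coprime_exists[of m d] \<open>g \<noteq> 0\<close> unfolding g_def by blast
  have "g^3 * (d'^3 + t*m'^2*d' - m'^3 - s*m'*d'^2) = 0"
    using assms(2) unfolding m d by algebra
  with \<open>g \<noteq> 0\<close> have reduced: "d'^3 + t*m'^2*d' - m'^3 - s*m'*d'^2 = 0" by simp
  have "d' dvd m'^3"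
    using reduced by (intro dvdI[of _ _ "t*m'^2 - s*m'*d' + d'^2"]) algebra
  with \<open>coprime m' d'\<close> have "is_unit d'"
    by (metis coprime_absorb_left coprime_commute coprime_power_right_iff)
  moreover have "m' dvd d'^3"
    using reduced by (intro dvdI[of _ _ "m'^2 - t*m'*d' + s*d'^2"]) algebra
  with \<open>coprime m' d'\<close> have "is_unit m'"
    by (metis coprime_absorb_left coprime_power_right_iff)
  ultimately show ?thesis unfolding m d by (simp add: abs_mult)
qed

lemma unimodular_integer_eigenvector:
  fixes A :: "int^3^3"
  assumes "det A = 1" and "c \<noteq> 0" and "d \<noteq> 0" and eigen: "d *s (A *v c) = m *s c"
  shows "\<exists>e. (e = 1 \<or> e = -1) \<and> A *v c = e *s c"
proof -
  have "(mat d ** A - mat m) *v c = 0"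
    using eigen by (simp add: matrix_vector_mult_diff_rdistrib matrix_vector_mul_assoc[symmetric]
        mat_mult_vector)
  then have "det (mat d ** A - mat m) = 0"
    using \<open>c \<noteq> 0\<close> by (rule det_eq_0_of_kernel)
  then have "d^3 + trace A * m^2 * d = m^3 + principal_minor_sum A * m * d^2"
    using det_scaled_sub_mat[of d A m] \<open>det A = 1\<close> by simp
  then have "\<bar>m\<bar> = \<bar>d\<bar>"
    using cubic_rational_root_unit \<open>d \<noteq> 0\<close> by blast
  then obtain e where e: "e = 1 \<or> e = -1" and "m = e * d"
    by (metis abs_eq_iff mult_1 mult_minus_left)
  have "d * (A *v c)$i = d * (e * c$i)" for i
    using eigen \<open>m = e * d\<close> by (auto simp: vec_eq_iff mult_ac)
  with \<open>d \<noteq> 0\<close> have "A *v c = e *s c"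
    by (simp add: vec_eq_iff)
  with e show ?thesis by blast
qed

lemma is_eigenvalue_of_int:
  fixes A :: "int^3^3"
  assumes "A *v c = e *s c" and "c \<noteq> 0"
  shows "is_eigenvalue A (of_int e)"
proof -
  define v :: "complex^3" where "v = (\<chi> i. of_int (c$i))"
  have "cmat A *v v = of_int e *s v"
  proof -
    have "(cmat A *v v)$i = of_int ((A *v c)$i)" for i
      by (simp add: cmat_def matrix_vector_mult_def v_def)
    with assms(1) show ?thesis by (simp add: vec_eq_iff v_def)
  qed
  moreover have "v \<noteq> 0"
    using assms(2) by (simp add: vec_eq_iff v_def)
  ultimately show ?thesis
    unfolding is_eigenvalue_def by blast
qed

text \<open>Passing to the adjugate when \<open>C\<close> has rank two reduces to the rank-one case, since
  \<open>adjugate3 (adjugate3 C) = det C \<cdot> C = 0\<close>.\<close>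
lemma hyperbolic_commute_singular:
  fixes A C :: "int^3^3"
  assumes "det A = 1" and "hyperbolic A" and "A ** C = C ** A" and "det C = 0"
  shows "C = 0"
proof (rule ccontr)
  assume "C \<noteq> 0"
  define D where "D = (if adjugate3 C = 0 then C else adjugate3 C)"
  have "D \<noteq> 0" using \<open>C \<noteq> 0\<close> by (simp add: D_def)
  then obtain k l where "D$k$l \<noteq> 0" by (auto simp: vec_eq_iff)
  have "adjugate3 D = 0"
    by (simp add: D_def adjugate3_adjugate3 \<open>det C = 0\<close>)
  moreover have "A ** D = D ** A"
    using assms(3) commute_adjugate3[OF assms(3)] by (simp add: D_def)
  ultimately have "D$k$l *s (A *v column l D) = (D ** A)$k$l *s column l D"
    by (rule commute_rank_one_column_eigenvector)
  moreover have "column l D \<noteq> 0"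
    using \<open>D$k$l \<noteq> 0\<close> by (auto simp: vec_eq_iff column_def)
  ultimately obtain e :: int where "e = 1 \<or> e = -1" and "A *v column l D = e *s column l D"
    using unimodular_integer_eigenvector[OF \<open>det A = 1\<close>] \<open>D$k$l \<noteq> 0\<close> by blast
  then have "is_eigenvalue A (of_int e)" and "cmod (of_int e) = 1"
    using is_eigenvalue_of_int \<open>column l D \<noteq> 0\<close> by auto
  with \<open>hyperbolic A\<close> show False
    unfolding hyperbolic_def by blast
qed

lemma eigenvalue_char_poly:
  assumes "is_eigenvalue B \<mu>"
  shows "\<mu>^3 = of_int (trace B) * \<mu>^2 - of_int (principal_minor_sum B) * \<mu> + of_int (det B)"
proof -
  obtain v where "v \<noteq> 0" and "cmat B *v v = \<mu> *s v"
    using assms by (auto simp: is_eigenvalue_def)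
  then have "(cmat B - mat \<mu>) *v v = 0"
    by (simp add: matrix_vector_mult_diff_rdistrib mat_mult_vector)
  then have "det (cmat B - mat \<mu>) = 0"
    using \<open>v \<noteq> 0\<close> by (rule det_eq_0_of_kernel)
  moreover have "trace (cmat B) = of_int (trace B)"
    and "principal_minor_sum (cmat B) = of_int (principal_minor_sum B)"
    and "det (cmat B) = of_int (det B)"
    by (simp_all add: cmat_def trace_3 principal_minor_sum_def det_3)
  ultimately show ?thesis
    using det_sub_mat[of "cmat B" \<mu>] by (simp add: algebra_simps)
qed

text \<open>If \<open>\<mu>\<close> is a root of the characteristic polynomial with \<open>|\<mu>| = 1\<close>, so is
  \<open>cnj \<mu> = 1 / \<mu>\<close>; subtracting the two equations leaves \<open>(s - t) \<mu> (\<mu> + 1) = 0\<close>, where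
  \<open>t\<close> is the trace and \<open>s\<close> the sum of principal minors. Either way \<open>1\<close> or \<open>-1\<close> is a root.\<close>
lemma unit_eigenvalue_imp_sign_eigenvalue:
  fixes B :: "int^3^3"
  assumes "det B = 1" and "is_eigenvalue B \<mu>" and "cmod \<mu> = 1"
  obtains e :: int where "e = 1 \<or> e = -1" and "det (B - mat e) = 0"
proof -
  let ?t = "of_int (trace B) :: complex" and ?s = "of_int (principal_minor_sum B) :: complex"
  have root: "\<mu>^3 = ?t * \<mu>^2 - ?s * \<mu> + 1"
    using eigenvalue_char_poly[OF assms(2)] \<open>det B = 1\<close> by simp
  then have "cnj \<mu> ^ 3 = ?t * cnj \<mu> ^ 2 - ?s * cnj \<mu> + 1"
    by (metis complex_cnj_add complex_cnj_diff complex_cnj_mult complex_cnj_of_int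
        complex_cnj_one complex_cnj_power)
  moreover have "\<mu> * cnj \<mu> = 1"
    using complex_norm_square[of \<mu>] \<open>cmod \<mu> = 1\<close> by simp
  ultimately have "(?s - ?t) * \<mu> * (\<mu> + 1) = 0"
    using root by algebra
  moreover have "\<mu> \<noteq> 0" using \<open>cmod \<mu> = 1\<close> by auto
  ultimately consider "principal_minor_sum B = trace B" | "\<mu> = -1"
    by (metis add_eq_0_iff_both_eq_0 eq_neg_iff_add_eq_0 mult_eq_0_iff of_int_eq_iff right_minus_eq)
  then show thesis
  proof cases
    case 1
    then have "det (B - mat 1) = 0"
      using det_sub_mat[of B 1] \<open>det B = 1\<close> by simp
    then show thesis using that by blast
  next
    case 2
    with root have "of_int (trace B + principal_minor_sum B + 2) = (0::complex)"
      by (simp add: algebra_simps)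
    then have "det (B - mat (-1)) = 0"
      using det_sub_mat[of B "-1"] \<open>det B = 1\<close> by (simp only: of_int_eq_0_iff) simp
    then show thesis using that by blast
  qed
qed

theorem mainTheorem13:
  fixes A B :: "int^3^3"
  assumes "SL3Z A" and "hyperbolic A"
    and "SL3Z B" and "A ** B = B ** A"
  shows "B = mat 1 \<or> hyperbolic B"
proof (rule disjCI)
  assume "\<not> hyperbolic B"
  then obtain \<mu> where "is_eigenvalue B \<mu>" and "cmod \<mu> = 1"
    by (auto simp: hyperbolic_def)
  moreover have "det A = 1" and "det B = 1"
    using \<open>SL3Z A\<close> \<open>SL3Z B\<close> by (simp_all add: SL3Z_def)
  ultimately obtain e :: int where e: "e = 1 \<or> e = -1" and "det (B - mat e) = 0"
    using unit_eigenvalue_imp_sign_eigenvalue by blast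
  then have "B - mat e = 0"
    using hyperbolic_commute_singular[OF \<open>det A = 1\<close> \<open>hyperbolic A\<close>]
      commute_sub_mat[OF \<open>A ** B = B ** A\<close>] by blast
  then have "B = mat e" by simp
  with \<open>det B = 1\<close> e show "B = mat 1"
    by (auto simp: det_3 mat_def)
qed

end
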